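(* Let $\gamma>0$, $v\in[0,1]^N$ and $r\in[0,1]^N$, and let $$q\in\arg\max_{\rho\in\Delta(\mathcal{S})}\;\mathbb{E}_{S\sim\rho}[R(S,v,r)]-\frac{(K+1)^4}{\gamma}\sum_{i=1}^N\log\frac{1}{w_i(\rho)}.$$ Then $$\max_{S^\star\in\mathcal{S}}R(S^\star,v,r)-\mathbb{E}_{S\sim q}[R(S,v,r)]\le\frac{N(K+1)^4}{\gamma},$$ and for every $S\in\mathcal{S}$, $$\sum_{i\in S}\frac{1}{w_i(q)}\le N+\frac{\gamma}{(K+1)^4}\Big(\max_{S^\star\in\mathcal{S}}R(S^\star,v,r)-R(S,v,r)\Big).$$
   Context: $N\ge K\ge1$ are integers and $\mathcal{S}$ is the collection of subsets $S\subseteq[N]$ with $1\le|S|\le K$; $\Delta(\mathcal{S})$ is the set of probability distributions on $\mathcal{S}$. For $S\in\mathcal{S}$, $v,r\in[0,1]^N$, $R(S,v,r)=\frac{\sum_{i\in S}r_iv_i}{1+\sum_{i\in S}v_i}$. For $\rho\in\Delta(\mathcal{S})$, $w_i(\rho)=\sum_{S\in\mathcal{S}:\,i\in S}\rho(S)$ (the probability that item $i$ belongs to a set drawn from $\rho$). *)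

theory Defs
  imports "HOL-Analysis.Analysis"
begin

definition Sets :: "nat \<Rightarrow> nat \<Rightarrow> nat set set" where
  "Sets N K = {S. S \<subseteq> {1..N} \<and> 1 \<le> card S \<and> card S \<le> K}"

definition Rev :: "nat set \<Rightarrow> (nat \<Rightarrow> real) \<Rightarrow> (nat \<Rightarrow> real) \<Rightarrow> real" where
  "Rev S v r = (\<Sum>i\<in>S. r i * v i) / (1 + (\<Sum>i\<in>S. v i))"

definition is_dist :: "nat \<Rightarrow> nat \<Rightarrow> (nat set \<Rightarrow> real) \<Rightarrow> bool" where
  "is_dist N K \<rho> \<longleftrightarrow> (\<forall>S. 0 \<le> \<rho> S) \<and> (\<forall>S. S \<notin> Sets N K \<longrightarrow> \<rho> S = 0)
      \<and> (\<Sum>S\<in>Sets N K. \<rho> S) = 1"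

definition wprob :: "nat \<Rightarrow> nat \<Rightarrow> (nat set \<Rightarrow> real) \<Rightarrow> nat \<Rightarrow> real" where
  "wprob N K \<rho> i = (\<Sum>S\<in>{S\<in>Sets N K. i \<in> S}. \<rho> S)"

definition exp_rev :: "nat \<Rightarrow> nat \<Rightarrow> (nat set \<Rightarrow> real) \<Rightarrow> (nat \<Rightarrow> real) \<Rightarrow> (nat \<Rightarrow> real) \<Rightarrow> real" where
  "exp_rev N K \<rho> v r = (\<Sum>S\<in>Sets N K. \<rho> S * Rev S v r)"

text \<open>Regularised objective, valued in the extended reals: if some w_i(rho) = 0
  then log(1/w_i(rho)) = +infinity and the objective is -infinity.\<close>
definition objective :: "nat \<Rightarrow> nat \<Rightarrow> real \<Rightarrow> (nat \<Rightarrow> real) \<Rightarrow> (nat \<Rightarrow> real) \<Rightarrow> (nat set \<Rightarrow> real) \<Rightarrow> ereal" where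
  "objective N K \<gamma> v r \<rho> =
     (if \<forall>i\<in>{1..N}. 0 < wprob N K \<rho> i
      then ereal (exp_rev N K \<rho> v r
                  - (real (K+1))^4 / \<gamma> * (\<Sum>i=1..N. ln (1 / wprob N K \<rho> i)))
      else -\<infinity>)"

end

theory Submission
  imports Defs
begin

text \<open>Mixing the maximiser q with a point mass on S, with weight t, keeps the objective
  below its value at q. Dividing the resulting inequality by t and letting t tend to 0 gives
  the first-order optimality condition
  Rev S - E_q[Rev] \<le> c (N - \<Sum>(i \<in> S) 1 / w_i(q)), where c = (K+1)^4/\<gamma>.
  Both claims follow: the first with S a best set (the sum is nonnegative), the second
  since E_q[Rev] never exceeds the best revenue. The maximiser has all w_i(q) > 0
  because the uniform distribution has finite objective.\<close>

lemma ln_ratio_le_slope: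
  fixes w x t :: real
  assumes "0 < w" "0 < (1 - t) * w + t * x"
  shows "ln (w / ((1 - t) * w + t * x)) \<le> t * ((w - x) / ((1 - t) * w + t * x))"
proof -
  have "ln (w / ((1 - t) * w + t * x)) \<le> w / ((1 - t) * w + t * x) - 1"
    using assms by (intro ln_le_minus_one) simp
  also have "\<dots> = t * ((w - x) / ((1 - t) * w + t * x))"
    using assms(2) by (simp add: field_simps)
  finally show ?thesis .
qed

lemma log_barrier_first_order:
  fixes w x :: "'a \<Rightarrow> real" and c D :: real
  assumes "0 \<le> c" and w_pos: "\<forall>i\<in>I. 0 < w i" and x_nonneg: "\<forall>i\<in>I. 0 \<le> x i"
    and slope: "\<And>t. 0 < t \<Longrightarrow> t < 1 \<Longrightarrow>
        t * D \<le> c * (\<Sum>i\<in>I. ln (w i / ((1 - t) * w i + t * x i)))"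
  shows "D \<le> c * (\<Sum>i\<in>I. 1 - x i / w i)"
proof -
  define g where "g t = c * (\<Sum>i\<in>I. (w i - x i) / ((1 - t) * w i + t * x i))" for t
  have mix_pos: "0 < (1 - t) * w i + t * x i" if "0 < t" "t < 1" "i \<in> I" for t i
    using that w_pos x_nonneg by (simp add: add_pos_nonneg)
  have "D \<le> g t" if t: "0 < t" "t < 1" for t
  proof -
    have "t * D \<le> c * (\<Sum>i\<in>I. t * ((w i - x i) / ((1 - t) * w i + t * x i)))"
      using slope[OF t] assms(1) w_pos mix_pos[OF t]
      by (smt (verit) ln_ratio_le_slope mult_left_mono sum_mono)
    also have "\<dots> = t * g t"
      by (simp add: g_def sum_distrib_left[symmetric] del: times_divide_eq_right)
    finally show ?thesis using t by simp
  qed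
  hence "eventually (\<lambda>t. D \<le> g t) (at_right 0)"
    using eventually_at_right_real[of 0 1] by (auto elim: eventually_mono)
  moreover have "(g \<longlongrightarrow> c * (\<Sum>i\<in>I. (w i - x i) / ((1 - 0) * w i + 0 * x i))) (at_right 0)"
    unfolding g_def using w_pos by (intro tendsto_intros) auto
  ultimately have "D \<le> c * (\<Sum>i\<in>I. (w i - x i) / w i)"
    by (simp add: tendsto_lowerbound)
  also have "\<dots> = c * (\<Sum>i\<in>I. 1 - x i / w i)"
    using w_pos by (intro arg_cong[where f = "(*) c"] sum.cong) (auto simp: field_simps)
  finally show ?thesis .
qed

lemma finite_Sets: "finite (Sets N K)"
  by (rule finite_subset[of _ "Pow {1..N}"]) (auto simp: Sets_def)

lemma singleton_in_Sets: "1 \<le> K \<Longrightarrow> i \<in> {1..N} \<Longrightarrow> {i} \<in> Sets N K"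
  by (auto simp: Sets_def)

lemma Sets_subset: "S \<in> Sets N K \<Longrightarrow> S \<subseteq> {1..N}"
  by (simp add: Sets_def)

definition mix_dist :: "real \<Rightarrow> (nat set \<Rightarrow> real) \<Rightarrow> (nat set \<Rightarrow> real) \<Rightarrow> nat set \<Rightarrow> real" where
  "mix_dist t \<rho> \<sigma> T = (1 - t) * \<rho> T + t * \<sigma> T"

definition point_dist :: "nat set \<Rightarrow> nat set \<Rightarrow> real" where
  "point_dist S T = (if T = S then 1 else 0)"

lemma is_dist_mix:
  assumes "is_dist N K \<rho>" "is_dist N K \<sigma>" "0 \<le> t" "t \<le> 1"
  shows "is_dist N K (mix_dist t \<rho> \<sigma>)"
  using assms
  by (auto simp: is_dist_def mix_dist_def sum.distrib sum_distrib_left[symmetric])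

lemma wprob_mix:
  "wprob N K (mix_dist t \<rho> \<sigma>) i = (1 - t) * wprob N K \<rho> i + t * wprob N K \<sigma> i"
  by (simp add: wprob_def mix_dist_def sum.distrib sum_distrib_left)

lemma exp_rev_mix:
  "exp_rev N K (mix_dist t \<rho> \<sigma>) v r = (1 - t) * exp_rev N K \<rho> v r + t * exp_rev N K \<sigma> v r"
  by (simp add: exp_rev_def mix_dist_def distrib_right sum.distrib sum_distrib_left mult.assoc)

lemma is_dist_point: "S \<in> Sets N K \<Longrightarrow> is_dist N K (point_dist S)"
  by (auto simp: is_dist_def point_dist_def finite_Sets)

lemma wprob_point: "S \<in> Sets N K \<Longrightarrow> wprob N K (point_dist S) i = (if i \<in> S then 1 else 0)"
  by (simp add: wprob_def point_dist_def finite_Sets)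

lemma exp_rev_point: "S \<in> Sets N K \<Longrightarrow> exp_rev N K (point_dist S) v r = Rev S v r"
  by (simp add: exp_rev_def point_dist_def finite_Sets if_distrib[where f = "\<lambda>a. a * _"] cong: if_cong)

lemma exp_rev_le_Max:
  assumes "is_dist N K \<rho>"
  shows "exp_rev N K \<rho> v r \<le> (MAX S\<in>Sets N K. Rev S v r)"
proof -
  have "exp_rev N K \<rho> v r \<le> (\<Sum>T\<in>Sets N K. \<rho> T * (MAX S\<in>Sets N K. Rev S v r))"
    unfolding exp_rev_def using assms
    by (intro sum_mono mult_left_mono) (auto simp: is_dist_def finite_Sets)
  also have "\<dots> = (MAX S\<in>Sets N K. Rev S v r)"
    using assms by (simp add: is_dist_def sum_distrib_right[symmetric])
  finally show ?thesis .
qed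

lemma objective_eq_of_wprob_pos:
  "\<forall>i\<in>{1..N}. 0 < wprob N K \<rho> i \<Longrightarrow> objective N K \<gamma> v r \<rho> =
     ereal (exp_rev N K \<rho> v r - (real (K+1))^4 / \<gamma> * (\<Sum>i=1..N. ln (1 / wprob N K \<rho> i)))"
  by (simp add: objective_def)

lemma exists_dist_wprob_pos:
  assumes "1 \<le> K" "1 \<le> N"
  shows "\<exists>\<rho>. is_dist N K \<rho> \<and> (\<forall>i\<in>{1..N}. 0 < wprob N K \<rho> i)"
proof -
  define u where "u T = (if T \<in> Sets N K then 1 / real (card (Sets N K)) else 0)" for T
  have "{1} \<in> Sets N K" using singleton_in_Sets assms by simp
  hence card_pos: "0 < card (Sets N K)"
    using finite_Sets card_gt_0_iff by blast
  have "is_dist N K u"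
    using card_pos by (auto simp: is_dist_def u_def)
  moreover have "0 < wprob N K u i" if "i \<in> {1..N}" for i
  proof -
    have "{i} \<in> {T \<in> Sets N K. i \<in> T}"
      using singleton_in_Sets[OF assms(1) that] by simp
    moreover have "finite {T \<in> Sets N K. i \<in> T}" using finite_Sets by simp
    ultimately have "0 < card {T \<in> Sets N K. i \<in> T}"
      using card_gt_0_iff by blast
    thus ?thesis using card_pos by (simp add: wprob_def u_def)
  qed
  ultimately show ?thesis by blast
qed

lemma maximiser_wprob_pos:
  assumes "1 \<le> K" "1 \<le> N"
    and max: "\<forall>\<rho>. is_dist N K \<rho> \<longrightarrow> objective N K \<gamma> v r \<rho> \<le> objective N K \<gamma> v r q"
  shows "\<forall>i\<in>{1..N}. 0 < wprob N K q i"
proof -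
  obtain \<rho> where "is_dist N K \<rho>" "\<forall>i\<in>{1..N}. 0 < wprob N K \<rho> i"
    using exists_dist_wprob_pos[OF assms(1,2)] by blast
  hence "objective N K \<gamma> v r q \<noteq> -\<infinity>"
    using max objective_eq_of_wprob_pos by fastforce
  thus ?thesis by (auto simp: objective_def split: if_splits)
qed

lemma maximiser_mix_point_slope:
  fixes S :: "nat set" and t :: real
  defines "x \<equiv> \<lambda>i. if i \<in> S then 1 else 0 :: real"
  assumes "is_dist N K q"
    and max: "\<forall>\<rho>. is_dist N K \<rho> \<longrightarrow> objective N K \<gamma> v r \<rho> \<le> objective N K \<gamma> v r q"
    and W_pos: "\<forall>i\<in>{1..N}. 0 < wprob N K q i"
    and S: "S \<in> Sets N K" and t: "0 < t" "t < 1"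
  shows "t * (Rev S v r - exp_rev N K q v r)
           \<le> (real (K+1))^4 / \<gamma> * (\<Sum>i=1..N. ln (wprob N K q i / ((1 - t) * wprob N K q i + t * x i)))"
proof -
  define c where "c = (real (K+1))^4 / \<gamma>"
  define W where "W = wprob N K q"
  define \<rho> where "\<rho> = mix_dist t q (point_dist S)"
  have w\<rho>: "wprob N K \<rho> i = (1 - t) * W i + t * x i" for i
    by (simp add: \<rho>_def wprob_mix wprob_point[OF S] W_def x_def)
  have w\<rho>_pos: "\<forall>i\<in>{1..N}. 0 < wprob N K \<rho> i"
    using W_pos t by (simp add: w\<rho> W_def x_def add_pos_nonneg)
  have "objective N K \<gamma> v r \<rho> \<le> objective N K \<gamma> v r q"
    using max is_dist_mix[OF assms(2) is_dist_point[OF S]] t by (simp add: \<rho>_def)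
  hence "exp_rev N K \<rho> v r - c * (\<Sum>i=1..N. ln (1 / wprob N K \<rho> i))
           \<le> exp_rev N K q v r - c * (\<Sum>i=1..N. ln (1 / W i))"
    using w\<rho>_pos W_pos by (simp add: objective_eq_of_wprob_pos W_def c_def)
  moreover have "(\<Sum>i=1..N. ln (1 / wprob N K \<rho> i)) - (\<Sum>i=1..N. ln (1 / W i))
                   = (\<Sum>i=1..N. ln (W i / ((1 - t) * W i + t * x i)))"
    unfolding sum_subtractf[symmetric] w\<rho>
  proof (intro sum.cong refl)
    fix i assume "i \<in> {1..N}"
    hence "0 < W i" "0 < (1 - t) * W i + t * x i"
      using W_pos w\<rho>_pos by (auto simp: w\<rho> W_def)
    thus "ln (1 / ((1 - t) * W i + t * x i)) - ln (1 / W i)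
            = ln (W i / ((1 - t) * W i + t * x i))"
      by (simp add: ln_div)
  qed
  moreover have "exp_rev N K \<rho> v r = (1 - t) * exp_rev N K q v r + t * Rev S v r"
    by (simp add: \<rho>_def exp_rev_mix exp_rev_point[OF S])
  ultimately have "t * (Rev S v r - exp_rev N K q v r)
                    \<le> c * (\<Sum>i=1..N. ln (W i / ((1 - t) * W i + t * x i)))"
    by (simp add: algebra_simps)
  thus ?thesis unfolding c_def W_def .
qed

lemma maximiser_first_order:
  assumes "1 \<le> K" "0 < \<gamma>" "is_dist N K q"
    and max: "\<forall>\<rho>. is_dist N K \<rho> \<longrightarrow> objective N K \<gamma> v r \<rho> \<le> objective N K \<gamma> v r q"
    and S: "S \<in> Sets N K"
  shows "Rev S v r - exp_rev N K q v r
           \<le> (real (K+1))^4 / \<gamma> * (real N - (\<Sum>i\<in>S. 1 / wprob N K q i))"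
proof -
  define x where "x i = (if i \<in> S then 1 else 0 :: real)" for i
  let ?W = "wprob N K q"
  have "1 \<le> N"
    using S card_mono[OF finite_atLeastAtMost Sets_subset[OF S]] by (auto simp: Sets_def)
  have W_pos: "\<forall>i\<in>{1..N}. 0 < ?W i"
    using maximiser_wprob_pos[OF assms(1) \<open>1 \<le> N\<close> max] .
  have "Rev S v r - exp_rev N K q v r \<le> (real (K+1))^4 / \<gamma> * (\<Sum>i\<in>{1..N}. 1 - x i / ?W i)"
    using maximiser_mix_point_slope[OF assms(3) max W_pos S] assms(2)
    by (intro log_barrier_first_order[OF _ W_pos]) (auto simp: x_def)
  also have "(\<Sum>i\<in>{1..N}. 1 - x i / ?W i) = real N - (\<Sum>i\<in>S. 1 / ?W i)"
  proof -
    have "(\<Sum>i\<in>{1..N}. x i / ?W i) = (\<Sum>i\<in>{1..N} \<inter> S. 1 / ?W i)"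
      by (simp add: sum.inter_restrict x_def) (intro sum.cong; simp)
    thus ?thesis using Sets_subset[OF S] by (simp add: sum_subtractf Int_absorb1)
  qed
  finally show ?thesis .
qed

theorem lemma4:
  fixes N K :: nat and \<gamma> :: real and v r :: "nat \<Rightarrow> real" and q :: "nat set \<Rightarrow> real"
  assumes "1 \<le> K" and "K \<le> N"
    and "0 < \<gamma>"
    and "\<forall>i\<in>{1..N}. 0 \<le> v i \<and> v i \<le> 1"
    and "\<forall>i\<in>{1..N}. 0 \<le> r i \<and> r i \<le> 1"
    and "is_dist N K q"
    and "\<forall>\<rho>. is_dist N K \<rho> \<longrightarrow> objective N K \<gamma> v r \<rho> \<le> objective N K \<gamma> v r q"
  shows "(MAX S\<in>Sets N K. Rev S v r) - exp_rev N K q v r \<le> real N * (real (K+1))^4 / \<gamma>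
    \<and> (\<forall>S\<in>Sets N K. (\<Sum>i\<in>S. 1 / wprob N K q i)
           \<le> real N + \<gamma> / (real (K+1))^4 * ((MAX S'\<in>Sets N K. Rev S' v r) - Rev S v r))"
proof
  let ?c = "(real (K+1))^4 / \<gamma>" and ?best = "MAX S\<in>Sets N K. Rev S v r"
  note first_order = maximiser_first_order[OF assms(1,3,6,7)]
  have c_pos: "0 < ?c" using assms(3) by simp
  have "Sets N K \<noteq> {}" using singleton_in_Sets[OF assms(1), of 1 N] assms(1,2) by auto
  then obtain S\<^sub>0 where S\<^sub>0: "S\<^sub>0 \<in> Sets N K" "Rev S\<^sub>0 v r = ?best"
    using finite_Sets by (metis (no_types, lifting) Max_in finite_imageI image_iff image_is_empty)
  have "0 \<le> (\<Sum>i\<in>S\<^sub>0. 1 / wprob N K q i)"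
    using maximiser_wprob_pos[OF assms(1) _ assms(7)] Sets_subset[OF S\<^sub>0(1)] assms(1,2)
    by (intro sum_nonneg) (auto simp: less_imp_le)
  hence "?best - exp_rev N K q v r \<le> real N * ?c"
    using first_order[OF S\<^sub>0(1)] S\<^sub>0(2) c_pos
    by (smt (verit, best) mult_left_mono right_diff_distrib mult.commute)
  thus "?best - exp_rev N K q v r \<le> real N * (real (K+1))^4 / \<gamma>" by simp
  show "\<forall>S\<in>Sets N K. (\<Sum>i\<in>S. 1 / wprob N K q i) \<le> real N + \<gamma> / (real (K+1))^4 * (?best - Rev S v r)"
  proof
    fix S assume S: "S \<in> Sets N K"
    have "?c * (\<Sum>i\<in>S. 1 / wprob N K q i) \<le> ?c * real N + (?best - Rev S v r)"
      using first_order[OF S] exp_rev_le_Max[OF assms(6), of v r]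
      by (simp add: right_diff_distrib)
    hence "(\<Sum>i\<in>S. 1 / wprob N K q i) \<le> (?c * real N + (?best - Rev S v r)) / ?c"
      using c_pos by (metis pos_le_divide_eq mult.commute)
    also have "\<dots> = real N + \<gamma> / (real (K+1))^4 * (?best - Rev S v r)"
      using assms(3) by (simp add: field_simps)
    finally show "(\<Sum>i\<in>S. 1 / wprob N K q i)
                    \<le> real N + \<gamma> / (real (K+1))^4 * (?best - Rev S v r)" .
  qed
qed

end
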